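(* Let $f\in\ell_1(\mathbb{Z})$ be non-negative, let $m,N\in\mathbb{N}$, $p\in(0,1)$, $H,\mu>0$, and assume $\|f\|_\infty\leq 2H$ and that for every integer interval $I$ of cardinality $N$, $|\{t\in I:\ f(t)\geq H\}|\leq\mu N$. Let $x_1,\dots,x_m$ be any integers and set $\widetilde f(t)=\mathbb{E}_b f(t+b_1x_1+\dots+b_mx_m)$, where $b=(b_1,\dots,b_m)$ has independent Bernoulli($p$) components. Then for every integer interval $J$ of cardinality $N$, $$|\{t\in J:\ \widetilde f(t)\geq\sqrt2 H\}|\leq \mu N/(\sqrt2-1).$$
   Context: A Bernoulli($p$) random variable takes value $1$ with probability $p$ and $0$ with probability $1-p$. *)

theory Defs
  imports "HOL-Probability.Probability"
begin

definition ftilde :: "(int \<Rightarrow> real) \<Rightarrow> nat \<Rightarrow> real \<Rightarrow> (nat \<Rightarrow> int) \<Rightarrow> int \<Rightarrow> real" where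
  "ftilde f m p x t =
     measure_pmf.expectation (Pi_pmf {1..m} False (\<lambda>_. bernoulli_pmf p))
       (\<lambda>b. f (t + (\<Sum>i=1..m. (if b i then 1 else 0) * x i)))"

end

theory Submission
  imports Defs
begin

text \<open>Since \<open>f \<le> 2H\<close>, pointwise \<open>f \<le> H + H \<cdot> [f \<ge> H]\<close>. Averaging over the random shift
  \<open>s = b\<^sub>1x\<^sub>1 + \<dots> + b\<^sub>mx\<^sub>m\<close>, an average of at least \<open>c H\<close> at \<open>t\<close> forces the probability \<open>E(t)\<close> that
  \<open>f(t + s) \<ge> H\<close> to be at least \<open>c - 1\<close>. The sum of \<open>E\<close> over a window of length \<open>N\<close> is the expected
  number of points of \<open>{f \<ge> H}\<close> in the shifted window, hence at most \<open>\<mu>N\<close>, and Markov's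
  inequality for this sum concludes with \<open>c = \<surd>2\<close>.\<close>

lemma card_window_shift:
  fixes Q :: "int \<Rightarrow> bool" and a b s :: int
  shows "card {t \<in> {a..<b}. Q (t + s)} = card {t \<in> {a + s..<b + s}. Q t}"
proof -
  have "{t \<in> {a + s..<b + s}. Q t} = (\<lambda>t. t + s) ` {t \<in> {a..<b}. Q (t + s)}"
    by (auto simp: image_iff) (metis diff_add_cancel diff_less_eq le_diff_eq)
  then show ?thesis
    by (simp add: card_image inj_on_def)
qed

lemma card_superlevel_le_sum:
  fixes E :: "'a \<Rightarrow> real"
  assumes "finite A" "c > 0" "\<And>t. t \<in> A \<Longrightarrow> E t \<ge> 0"
  shows "c * card {t \<in> A. c \<le> E t} \<le> (\<Sum>t\<in>A. E t)"
proof -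
  have "c * card {t \<in> A. c \<le> E t} = (\<Sum>t\<in>{t \<in> A. c \<le> E t}. c)"
    by simp
  also have "\<dots> \<le> (\<Sum>t\<in>{t \<in> A. c \<le> E t}. E t)"
    by (rule sum_mono) auto
  also have "\<dots> \<le> (\<Sum>t\<in>A. E t)"
    by (rule sum_mono2) (use assms in auto)
  finally show ?thesis .
qed

lemma window_sum_shift_prob_le:
  fixes D :: "int pmf" and Q :: "int \<Rightarrow> bool" and a :: int
  assumes "\<And>a. real (card {t \<in> {a..<a + int N}. Q t}) \<le> K"
  shows "(\<Sum>t\<in>{a..<a + int N}. measure_pmf.prob D {s. Q (t + s)}) \<le> K"
proof -
  have "(\<Sum>t\<in>{a..<a + int N}. measure_pmf.prob D {s. Q (t + s)})
      = (\<Sum>t\<in>{a..<a + int N}. measure_pmf.expectation D (indicator {u. Q (t + u)}))"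
    by (simp add: integral_indicator)
  also have "\<dots> = measure_pmf.expectation D (\<lambda>s. \<Sum>t\<in>{a..<a + int N}. indicator {u. Q (t + u)} s)"
    by (rule Bochner_Integration.integral_sum[where f = "\<lambda>t. indicator {u. Q (t + u)}", symmetric])
      (auto intro: measure_pmf.integrable_const_bound[where B = 1])
  also have "\<dots> = measure_pmf.expectation D (\<lambda>s. real (card {t \<in> {a + s..<a + s + int N}. Q t}))"
  proof (rule Bochner_Integration.integral_cong[OF refl])
    fix s
    have "(\<Sum>t\<in>{a..<a + int N}. indicator {u. Q (t + u)} s)
        = real (card {t \<in> {a..<a + int N}. Q (t + s)})"
      by (simp add: indicator_def sum.If_cases Int_def)
    also have "\<dots> = real (card {t \<in> {a + s..<a + s + int N}. Q t})"
      using card_window_shift[of a "a + int N" Q s] by (simp only: add.commute add.left_commute)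
    finally show "(\<Sum>t\<in>{a..<a + int N}. indicator {u. Q (t + u)} s)
      = real (card {t \<in> {a + s..<a + s + int N}. Q t})" .
  qed
  also have "\<dots> \<le> measure_pmf.expectation D (\<lambda>s. K)"
    by (rule integral_mono) (use assms in \<open>auto intro: measure_pmf.integrable_const_bound[where B = K]\<close>)
  finally show ?thesis
    by simp
qed

lemma shift_average_le_prob_superlevel:
  fixes f :: "int \<Rightarrow> real" and D :: "int pmf" and t :: int
  assumes "\<And>u. \<bar>f u\<bar> \<le> 2 * H"
  shows "measure_pmf.expectation D (\<lambda>s. f (t + s)) \<le> H + H * measure_pmf.prob D {s. H \<le> f (t + s)}"
proof -
  have "f u \<le> H + H * indicator {s. H \<le> f s} u" for u
    using assms[of u] by (auto simp: indicator_def)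
  then have "measure_pmf.expectation D (\<lambda>s. f (t + s))
      \<le> measure_pmf.expectation D (\<lambda>s. H + H * indicator {s. H \<le> f (t + s)} s)"
    using assms
    by (intro integral_mono measure_pmf.integrable_const_bound[where B = "2 * H"]
        measure_pmf.integrable_const_bound[where B = "\<bar>H\<bar> + \<bar>H\<bar>"])
      (auto simp: indicator_def)
  also have "\<dots> = H + H * measure_pmf.prob D {s. H \<le> f (t + s)}"
    by (subst Bochner_Integration.integral_add)
      (auto simp: integral_indicator intro: measure_pmf.integrable_const_bound[where B = 1])
  finally show ?thesis .
qed

lemma card_shift_average_superlevel_le:
  fixes f :: "int \<Rightarrow> real" and D :: "int pmf" and a :: int
  assumes c: "c > 1" and H: "H > 0" and bounded: "\<And>u. \<bar>f u\<bar> \<le> 2 * H"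
    and sparse: "\<And>a. real (card {t \<in> {a..<a + int N}. f t \<ge> H}) \<le> K"
  shows "real (card {t \<in> {a..<a + int N}. measure_pmf.expectation D (\<lambda>s. f (t + s)) \<ge> c * H})
    \<le> K / (c - 1)"
proof -
  let ?W = "{a..<a + int N}"
  define E where "E t = measure_pmf.prob D {s. H \<le> f (t + s)}" for t
  have "{t \<in> ?W. measure_pmf.expectation D (\<lambda>s. f (t + s)) \<ge> c * H} \<subseteq> {t \<in> ?W. c - 1 \<le> E t}"
  proof safe
    fix t
    assume "c * H \<le> measure_pmf.expectation D (\<lambda>s. f (t + s))"
    also have "\<dots> \<le> H + H * E t"
      unfolding E_def using bounded by (rule shift_average_le_prob_superlevel)
    finally have "(c - 1) * H \<le> E t * H"
      by (simp add: algebra_simps)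
    with H show "c - 1 \<le> E t"
      by simp
  qed
  then have "(c - 1) * card {t \<in> ?W. measure_pmf.expectation D (\<lambda>s. f (t + s)) \<ge> c * H}
      \<le> (c - 1) * card {t \<in> ?W. c - 1 \<le> E t}"
    using c by (intro mult_left_mono of_nat_mono card_mono) (auto intro: finite_subset[of _ ?W])
  also have "\<dots> \<le> (\<Sum>t\<in>?W. E t)"
    using c by (intro card_superlevel_le_sum) (auto simp: E_def)
  also have "\<dots> \<le> K"
    unfolding E_def using sparse by (rule window_sum_shift_prob_le)
  finally show ?thesis
    using c by (simp add: field_simps)
qed

theorem lemma4p10:
  fixes f :: "int \<Rightarrow> real" and m N :: nat and p H \<mu> :: real and x :: "nat \<Rightarrow> int"
  assumes l1: "(\<lambda>t. \<bar>f t\<bar>) summable_on UNIV"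
    and nonneg: "\<And>t. f t \<ge> 0"
    and p: "0 < p" "p < 1"
    and H: "H > 0" and mu: "\<mu> > 0"
    and sup: "\<And>t. \<bar>f t\<bar> \<le> 2 * H"
    and dens: "\<And>a::int. real (card {t \<in> {a..<a + int N}. f t \<ge> H}) \<le> \<mu> * real N"
  shows "\<forall>a::int. real (card {t \<in> {a..<a + int N}. ftilde f m p x t \<ge> sqrt 2 * H})
            \<le> \<mu> * real N / (sqrt 2 - 1)"
proof
  fix a :: int
  define D where "D = map_pmf (\<lambda>b. \<Sum>i=1..m. (if b i then 1 else 0) * x i)
    (Pi_pmf {1..m} False (\<lambda>_. bernoulli_pmf p))"
  have "ftilde f m p x = (\<lambda>t. measure_pmf.expectation D (\<lambda>s. f (t + s)))"
    by (simp add: ftilde_def D_def fun_eq_iff)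
  then show "real (card {t \<in> {a..<a + int N}. ftilde f m p x t \<ge> sqrt 2 * H})
      \<le> \<mu> * real N / (sqrt 2 - 1)"
    using card_shift_average_superlevel_le[of "sqrt 2", OF _ H sup dens] by simp
qed

end
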